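(* Let $n=2$ and assume $\lfloor (M_1+M_2)/p\rfloor=1$ (ample reduction). Let $I^{[1]}(z_1,z_2)\in\mathbb{F}_p[z_1,z_2]^2$ be the coefficient of $x^{p-1}$ in $(x-z_1)^{M_1}(x-z_2)^{M_2}\Big(\frac{e_1}{x-z_1}+\frac{e_2}{x-z_2}\Big)$. Then $$I^{[1]}(z_1,z_2)=(-1)^{M_2}(z_2-z_1)^{M_1+M_2-p}\frac{\Gamma_{\mathbb{F}_p}(M_1+1)\Gamma_{\mathbb{F}_p}(M_2+1)}{\Gamma_{\mathbb{F}_p}(M_1+M_2-p+1)}\Big(\frac{e_1}{M_1}-\frac{e_2}{M_2}\Big) =(-1)^{M_1}(z_1-z_2)^{M_1+M_2-p}\frac{\Gamma_{\mathbb{F}_p}(M_1+1)\Gamma_{\mathbb{F}_p}(M_2+1)}{\Gamma_{\mathbb{F}_p}(M_1+M_2-p+1)}\Big(\frac{e_2}{M_2}-\frac{e_1}{M_1}\Big).$$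
   Context: Let $p,q$ be primes with $p>q$ and $p>2$. Fix positive integers $m_1,m_2<q$, and let $M_i$ be the least positive integer with $M_i\equiv -m_iq^{-1}\pmod p$ ($1\le M_i\le p-1$); in formulas over $\mathbb{F}_p$, $M_i$ denotes its residue. $e_1,e_2$ is the standard basis of $\mathbb{F}_p^2$. For an integer $1\le x\le p$, $\Gamma_{\mathbb{F}_p}(x)\in\mathbb{F}_p$ denotes the residue of $(-1)^{x-1}(x-1)!$. *)

theory Defs
  imports "HOL-Computational_Algebra.Polynomial" "HOL-Number_Theory.Cong"
begin

definition Mres :: "nat \<Rightarrow> nat \<Rightarrow> nat \<Rightarrow> nat" where
  "Mres p q m = (LEAST M. 0 < M \<and> [M * q + m = 0] (mod p))"

(* Gamma_{F_p}(x) = residue of (-1)^(x-1) (x-1)!, mapped into a ring of characteristic p *)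
definition GammaFp :: "nat \<Rightarrow> 'a :: comm_ring_1" where
  "GammaFp x = of_int ((-1) ^ (x - 1) * fact (x - 1))"

(* I^[1](z1,z2): coefficient of x^(p-1) in
   (x-z1)^M1 (x-z2)^M2 (e1/(x-z1) + e2/(x-z2)), given componentwise as a pair
   (e1-component, e2-component) *)
definition I1 :: "nat \<Rightarrow> nat \<Rightarrow> nat \<Rightarrow> 'a :: comm_ring_1 \<Rightarrow> 'a \<Rightarrow> 'a \<times> 'a" where
  "I1 p M1 M2 z1 z2 =
     (coeff ([:-z1, 1:] ^ (M1 - 1) * [:-z2, 1:] ^ M2) (p - 1),
      coeff ([:-z1, 1:] ^ M1 * [:-z2, 1:] ^ (M2 - 1)) (p - 1))"

end

theory Submission
  imports Defs "HOL-Number_Theory.Residues"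
begin

(* Write x - z2 = (x - z1) + (z1 - z2) and expand binomially. Since p divides
   j choose (p - 1) for p <= j <= 2p - 2, only the power (x - z1)^(p-1) contributes to the
   coefficient of x^(p-1), so that coefficient of (x - z1)^a (x - z2)^b is
   (b choose n) (z1 - z2)^n with n = a + b + 1 - p. Wilson's theorem in the form
   r! (p-1-r)! = (-1)^(r+1) turns this binomial coefficient into a quotient of values
   of Gamma_{F_p}. The two components of I^[1] are the cases (a, b) = (M1 - 1, M2) and
   (M1, M2 - 1), and Gamma_{F_p}(M+1) = -M Gamma_{F_p}(M) brings them to the common factor. *)

lemma Mres_bounds:
  assumes "0 < p" and "coprime q p" and "\<not> p dvd m"
  shows "0 < Mres p q m \<and> Mres p q m < p"
proof -
  let ?P = "\<lambda>M. 0 < M \<and> [M * q + m = 0] (mod p)"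
  obtain x where x: "[q * x = 1] (mod p)"
    using cong_solve_coprime_nat[OF assms(2)] by auto
  define M where "M = x * (p - 1) * m"
  have "M * q + m = (q * x) * ((p - 1) * m) + m" by (simp add: M_def ac_simps)
  also have "[\<dots> = 1 * ((p - 1) * m) + m] (mod p)" by (intro cong_add cong_mult x cong_refl)
  also have "1 * ((p - 1) * m) + m = p * m" using assms(1) by (cases p) auto
  also have "[p * m = 0] (mod p)" by (simp add: cong_0_iff)
  finally have "[M * q + m = 0] (mod p)" .
  moreover have "[(M mod p) * q + m = M * q + m] (mod p)"
    by (intro cong_add cong_mult cong_refl) (simp add: cong_def)
  ultimately have W: "[(M mod p) * q + m = 0] (mod p)" using cong_trans by blast
  have "M mod p \<noteq> 0"
  proof
    assume "M mod p = 0"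
    with W show False using assms(3) by (simp add: cong_0_iff)
  qed
  with W have "?P (M mod p)" by simp
  then have "?P (Mres p q m)" and "Mres p q m \<le> M mod p"
    unfolding Mres_def by (rule LeastI, rule Least_le)
  moreover have "M mod p < p" using assms(1) by simp
  ultimately show ?thesis by simp
qed

lemma of_nat_fact_pred_CHAR:
  assumes "prime p" and "CHAR('a :: comm_ring_1) = p"
  shows "(of_nat (fact (p - 1)) :: 'a) = -1"
proof -
  have "int CHAR('a) dvd int (fact (p - 1)) + 1"
    using wilson_theorem[OF assms(1)] assms(2) by (simp add: cong_iff_dvd_diff)
  then have "(of_int (int (fact (p - 1)) + 1) :: 'a) = 0"
    by (simp only: of_int_eq_0_iff_char_dvd)
  then have "(of_nat (fact (p - 1)) :: 'a) + 1 = 0"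
    by (simp only: of_int_add of_int_of_nat_eq of_int_1)
  then show ?thesis by (simp add: eq_neg_iff_add_eq_0)
qed

lemma of_nat_fact_mult_fact_complement_CHAR:
  assumes "prime p" and "CHAR('a :: comm_ring_1) = p" and "r < p"
  shows "(of_nat (fact r) * of_nat (fact (p - 1 - r)) :: 'a) = (-1) ^ (r + 1)"
  using assms(3)
proof (induction r)
  case 0
  then show ?case using of_nat_fact_pred_CHAR[OF assms(1,2)] by simp
next
  case (Suc r)
  have "p - 1 - r = Suc (p - 1 - Suc r)" using Suc.prems by simp
  then have peel: "(of_nat (fact (p - 1 - r)) :: 'a)
      = of_nat (p - 1 - r) * of_nat (fact (p - 1 - Suc r))"
    by (simp only: fact_Suc of_nat_mult of_nat_id)
  have "(of_nat (p - 1 - r) + of_nat (Suc r) :: 'a) = of_nat p"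
    using Suc.prems by (simp flip: of_nat_add)
  also have "(of_nat p :: 'a) = 0" by (simp flip: assms(2))
  finally have neg: "(of_nat (p - 1 - r) :: 'a) = - of_nat (Suc r)"
    by (rule eq_neg_iff_add_eq_0[THEN iffD2])
  have "(-1) ^ (r + 1) = (of_nat (fact r) * of_nat (fact (p - 1 - r)) :: 'a)"
    using Suc by simp
  also have "\<dots> = - (of_nat (fact (Suc r)) * of_nat (fact (p - 1 - Suc r)))"
    unfolding peel neg by (simp add: algebra_simps)
  finally show ?case by simp
qed

lemma prime_dvd_choose_pred:
  assumes "prime p" and "p \<le> j" and "j < 2 * p - 1"
  shows "p dvd (j choose (p - 1))"
proof -
  have "fact (p - 1) * fact (j - (p - 1)) * (j choose (p - 1)) = fact j"
    using assms(2) by (intro binomial_fact_lemma) simp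
  moreover have "p dvd fact j" using assms prime_dvd_fact_iff by blast
  moreover have "\<not> p dvd fact (p - 1) * fact (j - (p - 1))"
    using assms prime_gt_0_nat[OF assms(1)] by (auto simp: prime_dvd_fact_iff prime_dvd_mult_iff)
  ultimately show ?thesis using assms(1) by (metis prime_dvd_mult_iff)
qed

lemma coeff_linear_power_pred_CHAR:
  assumes "prime p" and "CHAR('a :: comm_ring_1) = p" and "j < 2 * p - 1"
  shows "Polynomial.coeff ([:c :: 'a, 1:] ^ j) (p - 1) = (if j = p - 1 then 1 else 0)"
proof -
  consider "j < p - 1" | "j = p - 1" | "p \<le> j" by linarith
  then show ?thesis
  proof cases
    case 1
    then show ?thesis by (simp add: coeff_eq_0 degree_linear_power)
  next
    case 2
    then show ?thesis by (simp add: coeff_linear_power)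
  next
    case 3
    then have "(of_nat (j choose (p - 1)) :: 'a) = 0"
      using prime_dvd_choose_pred[OF assms(1) _ assms(3)] assms(2)
      by (simp add: of_nat_eq_0_iff_char_dvd)
    with 3 show ?thesis using prime_gt_0_nat[OF assms(1)] by (simp add: coeff_linear_poly_power)
  qed
qed

lemma coeff_linear_power_product_CHAR:
  fixes z1 z2 :: "'a :: comm_ring_1"
  assumes "prime p" and "CHAR('a) = p" and "a < p" and "b < p" and "a + b + 1 = p + n"
  shows "Polynomial.coeff ([:-z1, 1:] ^ a * [:-z2, 1:] ^ b) (p - 1)
           = of_nat (b choose n) * (z1 - z2) ^ n"
proof -
  let ?L = "[:-z1, 1:]" and ?d = "z1 - z2"
  have summand: "?L ^ a * (of_nat (b choose k) * [:?d:] ^ k * ?L ^ (b - k))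
      = Polynomial.smult (of_nat (b choose k) * ?d ^ k) (?L ^ (a + (b - k)))" for k
    by (simp add: of_nat_poly poly_const_pow power_add mult_ac)
  have "[:-z2, 1:] = [:?d:] + ?L" by simp
  then have "Polynomial.coeff (?L ^ a * [:-z2, 1:] ^ b) (p - 1)
      = (\<Sum>k\<le>b. of_nat (b choose k) * ?d ^ k * Polynomial.coeff (?L ^ (a + (b - k))) (p - 1))"
    by (simp only: binomial_ring sum_distrib_left coeff_sum summand coeff_smult)
  also have "\<dots> = (\<Sum>k\<le>b. if k = n then of_nat (b choose k) * ?d ^ k else 0)"
  proof (rule sum.cong[OF refl])
    fix k assume "k \<in> {..b}"
    then have "a + (b - k) < 2 * p - 1" and "a + (b - k) = p - 1 \<longleftrightarrow> k = n"
      using assms(3-5) by auto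
    then have "Polynomial.coeff (?L ^ (a + (b - k))) (p - 1) = (if k = n then 1 else 0)"
      using coeff_linear_power_pred_CHAR[OF assms(1,2)] by presburger
    then show "of_nat (b choose k) * ?d ^ k * Polynomial.coeff (?L ^ (a + (b - k))) (p - 1)
        = (if k = n then of_nat (b choose k) * ?d ^ k else 0)"
      by simp
  qed
  also have "\<dots> = of_nat (b choose n) * ?d ^ n"
    using assms(3,5) by simp
  finally show ?thesis .
qed

lemma of_nat_fact_neq_0_CHAR:
  assumes "prime p" and "CHAR('a :: comm_ring_1) = p" and "n < p"
  shows "(of_nat (fact n) :: 'a) \<noteq> 0"
  using assms by (simp add: of_nat_eq_0_iff_char_dvd prime_dvd_fact_iff)

lemma of_nat_choose_CHAR:
  assumes "prime p" and "CHAR('a :: field) = p" and "a < p" and "b < p" and "a + b + 1 = p + n"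
  shows "(of_nat (b choose n) :: 'a)
           = (-1) ^ (a + 1) * of_nat (fact a) * of_nat (fact b) / of_nat (fact n)"
proof -
  have "n \<le> b" and "b - n = p - 1 - a" using assms(3-5) by auto
  then have "of_nat (fact n) * of_nat (fact (p - 1 - a)) * of_nat (b choose n) = (of_nat (fact b) :: 'a)"
    by (metis binomial_fact_lemma of_nat_mult)
  then have "of_nat (fact a) * of_nat (fact (p - 1 - a)) * of_nat (fact n) * of_nat (b choose n)
      = (of_nat (fact a) * of_nat (fact b) :: 'a)"
    by (simp add: ac_simps)
  then have "(-1) ^ (a + 1) * (of_nat (fact n) * of_nat (b choose n))
      = (of_nat (fact a) * of_nat (fact b) :: 'a)"
    unfolding of_nat_fact_mult_fact_complement_CHAR[OF assms(1-3)] by (simp only: mult.assoc)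
  then have "of_nat (fact n) * of_nat (b choose n)
      = ((-1) ^ (a + 1) * of_nat (fact a) * of_nat (fact b) :: 'a)"
    by (metis left_minus_one_mult_self mult.assoc)
  moreover have "(of_nat (fact n) :: 'a) \<noteq> 0"
    using of_nat_fact_neq_0_CHAR[OF assms(1,2)] assms(3-5) by simp
  ultimately show ?thesis
    by (metis nonzero_mult_div_cancel_left)
qed

lemma GammaFp_Suc: "GammaFp (Suc n) = ((-1) ^ n * of_nat (fact n) :: 'a :: comm_ring_1)"
proof -
  have "(fact n :: int) = int (fact n)" by (rule of_nat_fact[symmetric])
  then show ?thesis unfolding GammaFp_def diff_Suc_1
    by (simp only: of_int_mult of_int_power of_int_minus of_int_1 of_int_of_nat_eq)
qed

lemma GammaFp_Suc_eq_mult: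
  assumes "0 < n"
  shows "GammaFp (Suc n) = - of_nat n * (GammaFp n :: 'a :: comm_ring_1)"
  using assms by (cases n) (simp_all add: GammaFp_Suc algebra_simps)

lemma of_nat_choose_GammaFp_CHAR:
  assumes "prime p" and "CHAR('a :: field) = p" and "a < p" and "b < p" and "a + b + 1 = p + n"
  shows "(of_nat (b choose n) :: 'a)
           = (-1) ^ (a + 1) * (GammaFp (a + 1) * GammaFp (b + 1) / GammaFp (n + 1))"
proof -
  have "(-1) ^ a * (-1) ^ b * (-1) = ((-1) ^ p * (-1) ^ n :: 'a)"
    using assms(5) by (metis power_add power_one_right)
  also have "(-1) ^ p = (-1 :: 'a)"
    using minus_power_prime_CHAR[of p, where 'a='a] assms(1,2) by (metis power_one)
  finally have sign: "(-1) ^ a * (-1) ^ b = ((-1) ^ n :: 'a)" by simp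
  have "GammaFp (a + 1) * GammaFp (b + 1) / GammaFp (n + 1)
      = ((-1) ^ a * (-1) ^ b * (of_nat (fact a) * of_nat (fact b)))
        / ((-1) ^ n * of_nat (fact n) :: 'a)"
    by (simp add: GammaFp_Suc ac_simps)
  also have "\<dots> = of_nat (fact a) * of_nat (fact b) / of_nat (fact n)"
    unfolding sign by simp
  finally show ?thesis
    using of_nat_choose_CHAR[OF assms] by simp
qed

lemma I1_closed_form:
  fixes z1 z2 :: "'a :: field"
  assumes "prime p" and "CHAR('a) = p" and "0 < M1" and "M1 < p" and "0 < M2" and "M2 < p"
    and "M1 + M2 = p + N"
  defines "C \<equiv> GammaFp (M1 + 1) * GammaFp (M2 + 1) / (GammaFp (N + 1) :: 'a)"
  shows "I1 p M1 M2 z1 z2 =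
           ((-1) ^ M1 * (z1 - z2) ^ N * C * (- (1 / of_nat M1)),
            (-1) ^ M1 * (z1 - z2) ^ N * C * (1 / of_nat M2))"
proof -
  have M1: "(of_nat M1 :: 'a) \<noteq> 0" and M2: "(of_nat M2 :: 'a) \<noteq> 0"
    using assms(2-6) by (auto simp: of_nat_eq_0_iff_char_dvd dest: dvd_imp_le)
  have "GammaFp (M1 + 1) = - of_nat M1 * (GammaFp M1 :: 'a)"
    and "GammaFp (M2 + 1) = - of_nat M2 * (GammaFp M2 :: 'a)"
    using GammaFp_Suc_eq_mult assms(3,5) by simp_all
  then have G1: "GammaFp M1 = - GammaFp (M1 + 1) / (of_nat M1 :: 'a)"
    and G2: "GammaFp M2 = - GammaFp (M2 + 1) / (of_nat M2 :: 'a)"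
    using M1 M2 by (simp_all add: field_simps)
  have "Polynomial.coeff ([:-z1, 1:] ^ (M1 - 1) * [:-z2, 1:] ^ M2) (p - 1)
      = of_nat (M2 choose N) * (z1 - z2) ^ N"
    using assms(3-7) by (intro coeff_linear_power_product_CHAR[OF assms(1,2)]) auto
  also have "(of_nat (M2 choose N) :: 'a)
      = (-1) ^ M1 * (GammaFp M1 * GammaFp (M2 + 1) / GammaFp (N + 1))"
    using of_nat_choose_GammaFp_CHAR[OF assms(1,2), of "M1 - 1" M2 N] assms(3-7) by simp
  finally have first: "Polynomial.coeff ([:-z1, 1:] ^ (M1 - 1) * [:-z2, 1:] ^ M2) (p - 1)
      = (-1) ^ M1 * (z1 - z2) ^ N * C * (- (1 / of_nat M1))"
    unfolding G1 C_def by (simp add: field_simps)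
  have "Polynomial.coeff ([:-z1, 1:] ^ M1 * [:-z2, 1:] ^ (M2 - 1)) (p - 1)
      = of_nat ((M2 - 1) choose N) * (z1 - z2) ^ N"
    using assms(3-7) by (intro coeff_linear_power_product_CHAR[OF assms(1,2)]) auto
  also have "(of_nat ((M2 - 1) choose N) :: 'a)
      = (-1) ^ (M1 + 1) * (GammaFp (M1 + 1) * GammaFp M2 / GammaFp (N + 1))"
    using of_nat_choose_GammaFp_CHAR[OF assms(1,2), of M1 "M2 - 1" N] assms(3-7) by simp
  finally have second: "Polynomial.coeff ([:-z1, 1:] ^ M1 * [:-z2, 1:] ^ (M2 - 1)) (p - 1)
      = (-1) ^ M1 * (z1 - z2) ^ N * C * (1 / of_nat M2)"
    unfolding G2 C_def by (simp add: field_simps)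
  show ?thesis
    unfolding I1_def first second ..
qed

lemma minus_one_power_mult_diff_power_swap:
  fixes x y :: "'a :: comm_ring_1"
  assumes "odd p" and "M1 + M2 = p + N"
  shows "(-1) ^ M2 * (y - x) ^ N = - ((-1) ^ M1 * (x - y) ^ N)"
proof -
  from assms have "even (M2 + N) \<longleftrightarrow> odd M1" by presburger
  then have "(-1) ^ M2 * (-1) ^ N = - ((-1) ^ M1 :: 'a)"
    by (auto simp: minus_one_power_iff simp flip: power_add)
  moreover have "(y - x) ^ N = (-1) ^ N * (x - y) ^ N"
    by (metis minus_diff_eq power_minus)
  ultimately show ?thesis
    by (metis mult.assoc mult_minus_left)
qed

theorem theorem4p4:
  fixes p q m1 m2 :: nat and z1 z2 :: "'a :: field"
  assumes "prime p" and "prime q" and "p > q" and "p > 2"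
    and "0 < m1" and "m1 < q" and "0 < m2" and "m2 < q"
    and "CHAR('a) = p"
    and "(Mres p q m1 + Mres p q m2) div p = 1"
  shows "let M1 = Mres p q m1; M2 = Mres p q m2;
             C = GammaFp (M1 + 1) * GammaFp (M2 + 1) / (GammaFp (M1 + M2 - p + 1) :: 'a)
         in I1 p M1 M2 z1 z2 =
              ((-1) ^ M2 * (z2 - z1) ^ (M1 + M2 - p) * C * (1 / of_nat M1),
               (-1) ^ M2 * (z2 - z1) ^ (M1 + M2 - p) * C * (- (1 / of_nat M2)))
          \<and> I1 p M1 M2 z1 z2 =
              ((-1) ^ M1 * (z1 - z2) ^ (M1 + M2 - p) * C * (- (1 / of_nat M1)),
               (-1) ^ M1 * (z1 - z2) ^ (M1 + M2 - p) * C * (1 / of_nat M2))"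
proof -
  define M1 M2 N where "M1 = Mres p q m1" and "M2 = Mres p q m2" and "N = M1 + M2 - p"
  have "coprime q p"
    using assms(1-3) by (simp add: prime_imp_coprime_nat coprime_commute nat_dvd_not_less prime_gt_0_nat)
  moreover have "\<not> p dvd m1" and "\<not> p dvd m2"
    using assms(3,5-8) by (auto dest: dvd_imp_le)
  ultimately have bounds: "0 < M1" "M1 < p" "0 < M2" "M2 < p"
    unfolding M1_def M2_def using Mres_bounds[of p q] assms(1) prime_gt_0_nat by blast+
  have ample: "M1 + M2 = p + N"
    using assms(10) unfolding M1_def M2_def N_def by (cases "p \<le> Mres p q m1 + Mres p q m2") auto
  have "odd p" using assms(1,4) by (simp add: prime_odd_nat)
  then show ?thesis
    using I1_closed_form[OF assms(1,9) bounds ample, of z1 z2]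
      minus_one_power_mult_diff_power_swap[OF _ ample, where x = z1 and y = z2]
    unfolding Let_def M1_def[symmetric] M2_def[symmetric] N_def[symmetric] by simp
qed

end
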